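(* Let $r>5$ with $r\not\equiv 0\pmod 3$, and let $C_r$ be the directed cycle of length $r$. Then $3\leq\chi^*_o(C_r)\leq 4$.
   Context: The directed cycle $C_r$ has vertices $u_i$, $i\in\mathbb{Z}/r\mathbb{Z}$, and arcs $u_iu_{i+1}$. For a set $S$ of $k$ colors, a $b$-fold oriented $k$-coloring of an oriented graph $G$ is a map $f$ from $V(G)$ to the $b$-element subsets of $S$ such that (i) $f(x)\cap f(y)=\emptyset$ for every arc $xy$, and (ii) for all arcs $xy, zw$, $f(x)\cap f(w)\neq\emptyset$ implies $f(y)\cap f(z)=\emptyset$. $\chi^b_o(G)$ is the minimum such $k$, and $\chi^*_o(G)=\lim_{b\to\infty}\chi^b_o(G)/b=\inf_{b\ge1}\chi^b_o(G)/b$. *)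

theory Defs
  imports Complex_Main
begin

definition b_fold_oriented_coloring ::
  "'a set \<Rightarrow> ('a \<times> 'a) set \<Rightarrow> nat \<Rightarrow> nat \<Rightarrow> ('a \<Rightarrow> nat set) \<Rightarrow> bool" where
  "b_fold_oriented_coloring V A b k f \<longleftrightarrow>
     (\<forall>x\<in>V. f x \<subseteq> {..<k} \<and> card (f x) = b) \<and>
     (\<forall>(x,y)\<in>A. f x \<inter> f y = {}) \<and>
     (\<forall>(x,y)\<in>A. \<forall>(z,w)\<in>A. f x \<inter> f w \<noteq> {} \<longrightarrow> f y \<inter> f z = {})"

definition chi_o_b :: "'a set \<Rightarrow> ('a \<times> 'a) set \<Rightarrow> nat \<Rightarrow> nat" where
  "chi_o_b V A b = (LEAST k. \<exists>f. b_fold_oriented_coloring V A b k f)"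

definition chi_o_frac :: "'a set \<Rightarrow> ('a \<times> 'a) set \<Rightarrow> real" where
  "chi_o_frac V A = (INF b\<in>{1..}. real (chi_o_b V A b) / real b)"

definition cycle_vertices :: "nat \<Rightarrow> nat set" where
  "cycle_vertices r = {..<r}"

definition cycle_arcs :: "nat \<Rightarrow> (nat \<times> nat) set" where
  "cycle_arcs r = {(i, (i + 1) mod r) | i. i < r}"

end

theory Submission
  imports Defs
begin

(* Three consecutive vertices u0, u1, u2 of C_r receive pairwise disjoint colour sets: the two
   arcs separate u0 from u1 and u1 from u2, and if f(u0) met f(u2), condition (ii) for the arcs
   u0u1 and u1u2 would force f(u1) to be empty.  Hence every b-fold colouring uses at least 3b
   colours.  Conversely, every r >= 6 is of the form 3m + 4n, so C_r maps homomorphically onto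
   the union of the directed cycles 0 -> 1 -> 2 -> 0 and 0 -> 1 -> 2 -> 3 -> 0 by winding m times
   around the first and n times around the second.  That union is an oriented graph on four
   vertices, so this is an oriented 4-colouring, and replacing every colour by a block of b fresh
   colours turns it into a b-fold 4b-colouring. *)

lemma chi_o_b_le:
  assumes "b_fold_oriented_coloring V A b k f"
  shows "chi_o_b V A b \<le> k"
  unfolding chi_o_b_def using assms by (blast intro: Least_le)

lemma chi_o_b_attained:
  assumes "b_fold_oriented_coloring V A b k f"
  shows "\<exists>g. b_fold_oriented_coloring V A b (chi_o_b V A b) g"
  unfolding chi_o_b_def by (rule LeastI_ex) (use assms in blast)

lemma chi_o_frac_le:
  assumes "1 \<le> b"
  shows "chi_o_frac V A \<le> real (chi_o_b V A b) / real b"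
  unfolding chi_o_frac_def
  by (rule cINF_lower) (use assms in \<open>auto intro: bdd_belowI[of _ 0]\<close>)

lemma chi_o_frac_ge:
  assumes "\<And>b. 1 \<le> b \<Longrightarrow> l * real b \<le> real (chi_o_b V A b)"
  shows "l \<le> chi_o_frac V A"
  unfolding chi_o_frac_def
  by (rule cINF_greatest) (use assms in \<open>auto simp: field_simps\<close>)

definition colour_blow_up :: "nat \<Rightarrow> ('a \<Rightarrow> nat set) \<Rightarrow> 'a \<Rightarrow> nat set" where
  "colour_blow_up a f x = (\<Union>j\<in>f x. {a * j..<a * j + a})"

lemma mem_colour_block: "i \<in> {a * j..<a * j + a} \<longleftrightarrow> 0 < a \<and> i div a = (j::nat)"
  by (auto simp: div_nat_eqI add.commute dividend_less_times_div)

lemma mem_colour_blow_up: "i \<in> colour_blow_up a f x \<longleftrightarrow> 0 < a \<and> i div a \<in> f x"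
  unfolding colour_blow_up_def UN_iff mem_colour_block by blast

lemma colour_blow_up_disjoint_iff:
  "colour_blow_up a f x \<inter> colour_blow_up a f y = {} \<longleftrightarrow> a = 0 \<or> f x \<inter> f y = {}"
proof -
  have "a * j \<in> colour_blow_up a f v" if "0 < a" "j \<in> f v" for j v
    using that by (simp add: mem_colour_blow_up)
  then show ?thesis unfolding disjoint_iff by (metis mem_colour_blow_up neq0_conv)
qed

lemma card_colour_blow_up:
  assumes "finite (f x)"
  shows "card (colour_blow_up a f x) = a * card (f x)"
proof -
  have "card (colour_blow_up a f x) = (\<Sum>j\<in>f x. card {a * j..<a * j + a})"
    unfolding colour_blow_up_def
    by (rule card_UN_disjoint) (use assms in \<open>auto simp only: disjoint_iff mem_colour_block\<close>)
  then show ?thesis by simp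
qed

lemma colour_blow_up_subset:
  assumes "f x \<subseteq> {..<k}"
  shows "colour_blow_up a f x \<subseteq> {..<a * k}"
  using assms by (auto simp: mem_colour_blow_up div_less_iff_less_mult mult.commute)

lemma b_fold_oriented_coloring_blow_up:
  assumes "b_fold_oriented_coloring V A b k f"
  shows "b_fold_oriented_coloring V A (a * b) (a * k) (colour_blow_up a f)"
proof -
  have "colour_blow_up a f x \<subseteq> {..<a * k} \<and> card (colour_blow_up a f x) = a * b"
    if "x \<in> V" for x
  proof -
    have "f x \<subseteq> {..<k}" "card (f x) = b"
      using assms that unfolding b_fold_oriented_coloring_def by auto
    moreover from this have "finite (f x)" using finite_subset by blast
    ultimately show ?thesis by (simp add: colour_blow_up_subset card_colour_blow_up)
  qed
  then show ?thesis
    using assms unfolding b_fold_oriented_coloring_def colour_blow_up_disjoint_iff by blast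
qed

lemma b_fold_oriented_coloring_of_hom:
  assumes "\<forall>x\<in>V. c x < k" and "\<forall>(x, y)\<in>A. (c x, c y) \<in> H" and "asym H"
  shows "b_fold_oriented_coloring V A 1 k (\<lambda>x. {c x})"
  using assms unfolding b_fold_oriented_coloring_def by (fastforce dest: asymD)

lemma b_fold_oriented_coloring_path:
  assumes f: "b_fold_oriented_coloring V A b k f" and "1 \<le> b"
    and arcs: "(x, y) \<in> A" "(y, z) \<in> A" and "x \<in> V" "y \<in> V" "z \<in> V"
  shows "3 * b \<le> k"
proof -
  have sub: "f v \<subseteq> {..<k}" and card: "card (f v) = b" if "v \<in> V" for v
    using f that unfolding b_fold_oriented_coloring_def by auto
  have fin: "finite (f v)" if "v \<in> V" for v
    using sub[OF that] finite_subset by blast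
  have "f x \<inter> f y = {}" "f y \<inter> f z = {}"
    using f arcs unfolding b_fold_oriented_coloring_def by fast+
  moreover have "f x \<inter> f z = {}"
  proof -
    have "f y \<inter> f y \<noteq> {}" using card[OF \<open>y \<in> V\<close>] \<open>1 \<le> b\<close> by auto
    then show ?thesis using f arcs unfolding b_fold_oriented_coloring_def by fast
  qed
  ultimately have "card (f x \<union> f y \<union> f z) = 3 * b"
    using fin card \<open>x \<in> V\<close> \<open>y \<in> V\<close> \<open>z \<in> V\<close>
    by (simp add: card_Un_disjoint Int_Un_distrib2)
  moreover have "f x \<union> f y \<union> f z \<subseteq> {..<k}"
    using sub \<open>x \<in> V\<close> \<open>y \<in> V\<close> \<open>z \<in> V\<close> by auto
  ultimately show ?thesis by (metis card_lessThan card_mono finite_lessThan)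
qed

definition cycles_3_4 :: "(nat \<times> nat) set" where
  "cycles_3_4 = {(0, 1), (1, 2), (2, 0), (2, 3), (3, 0)}"

lemma asym_cycles_3_4: "asym cycles_3_4"
  unfolding cycles_3_4_def by auto

lemma mod_3_arc_cycles_3_4: "(k mod 3, Suc k mod 3) \<in> cycles_3_4"
proof -
  have "k mod 3 = 0 \<or> k mod 3 = 1 \<or> k mod 3 = 2" by arith
  then show ?thesis unfolding cycles_3_4_def by (auto simp: mod_Suc)
qed

lemma mod_4_arc_cycles_3_4: "(k mod 4, Suc k mod 4) \<in> cycles_3_4"
proof -
  have "k mod 4 = 0 \<or> k mod 4 = 1 \<or> k mod 4 = 2 \<or> k mod 4 = 3" by arith
  then show ?thesis unfolding cycles_3_4_def by (auto simp: mod_Suc)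
qed

lemma cycle_hom_cycles_3_4:
  assumes "r = 3 * m + 4 * n"
  shows "\<exists>c. (\<forall>i. c i < 4) \<and> (\<forall>(x, y)\<in>cycle_arcs r. (c x, c y) \<in> cycles_3_4)"
proof -
  define c where "c i = (if i < 3 * m then i mod 3 else (i - 3 * m) mod 4)" for i
  \<comment> \<open>The wrap-around arc into vertex 0 fits the same pattern, as 3 m and 4 n are 0 mod 3 and 4.\<close>
  have succ: "c ((i + 1) mod r) = (if i < 3 * m then Suc i mod 3 else (Suc i - 3 * m) mod 4)"
    if "i < r" for i
  proof (cases "Suc i < r")
    case True
    then show ?thesis unfolding c_def by (cases "Suc i = 3 * m") auto
  next
    case False
    then have "Suc i = r" using that by simp
    then show ?thesis using assms unfolding c_def by auto
  qed
  have "(c i, c ((i + 1) mod r)) \<in> cycles_3_4" if "i < r" for i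
    using succ[OF that] mod_3_arc_cycles_3_4[of i] mod_4_arc_cycles_3_4[of "i - 3 * m"]
    unfolding c_def by (auto simp: Suc_diff_le)
  moreover have "c i < 4" for i unfolding c_def by auto
  ultimately show ?thesis unfolding cycle_arcs_def by blast
qed

lemma cycle_oriented_4_coloring:
  assumes "6 \<le> r"
  shows "\<exists>f. b_fold_oriented_coloring (cycle_vertices r) (cycle_arcs r) 1 4 f"
proof -
  have "\<exists>m n. r = 3 * m + 4 * n" using assms by presburger
  then obtain m n where "r = 3 * m + 4 * n" by blast
  then obtain c where "\<forall>i. c i < 4" "\<forall>(x, y)\<in>cycle_arcs r. (c x, c y) \<in> cycles_3_4"
    using cycle_hom_cycles_3_4 by blast
  then have "b_fold_oriented_coloring (cycle_vertices r) (cycle_arcs r) 1 4 (\<lambda>x. {c x})"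
    by (intro b_fold_oriented_coloring_of_hom[OF _ _ asym_cycles_3_4]) auto
  then show ?thesis by blast
qed

theorem lemma1:
  fixes r :: nat
  assumes "r > 5" and "\<not> (3 dvd r)"
  shows "3 \<le> chi_o_frac (cycle_vertices r) (cycle_arcs r) \<and>
         chi_o_frac (cycle_vertices r) (cycle_arcs r) \<le> 4"
proof -
  let ?V = "cycle_vertices r" and ?A = "cycle_arcs r"
  obtain f where f: "b_fold_oriented_coloring ?V ?A 1 4 f"
    using cycle_oriented_4_coloring assms(1) by fastforce
  have "3 * real b \<le> real (chi_o_b ?V ?A b)" if "1 \<le> b" for b
  proof -
    obtain g where g: "b_fold_oriented_coloring ?V ?A b (chi_o_b ?V ?A b) g"
      using chi_o_b_attained b_fold_oriented_coloring_blow_up[OF f, of b] by fastforce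
    have "(0, 1) \<in> ?A" "(1, 2) \<in> ?A" "{0, 1, 2} \<subseteq> ?V"
      using assms(1) unfolding cycle_arcs_def cycle_vertices_def by force+
    then have "3 * b \<le> chi_o_b ?V ?A b"
      using b_fold_oriented_coloring_path[OF g that] by simp
    then show ?thesis by (metis of_nat_le_iff of_nat_mult of_nat_numeral)
  qed
  then have "3 \<le> chi_o_frac ?V ?A" by (rule chi_o_frac_ge)
  moreover have "chi_o_frac ?V ?A \<le> 4"
    using chi_o_frac_le[of 1 ?V ?A] chi_o_b_le[OF f] by simp
  ultimately show ?thesis by simp
qed

end
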